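(* Let $a\in[-1,1)$ and $\psi_a=\mathds{1}_{[a,1]}$ on $[-1,1]$. Write $P_{\mathcal{A}_+}(\psi_a)=\sum_{n=0}^\infty c_nt^n$ with $c_n\ge0$, and let $S(a)=\{n\in\mathbb{N}:c_n>0\}$. Then $S(a)=\{0,1,2,3\}$ if and only if $\frac1{\sqrt5}<a<\frac{\sqrt{105}-5}{10}$. Moreover, for every such $a$, \[ P_{\mathcal{A}_+}(\psi_a)=\frac18(1-a)(4-5a-5a^2)+\frac{15}{32}(1-a^2)(3-7a^2)t+\frac{15}{8}a(1-a^2)t^2+\frac{35}{32}(1-a^2)(5a^2-1)t^3. \]
   Context: $\mathbb{N}=\{0,1,2,\dots\}$. $\psi_a(t)=0$ for $t\in[-1,a)$ and $\psi_a(t)=1$ for $t\in[a,1]$. $\mathcal{A}_+=\{\sum_{n=0}^\infty a_nt^n : a_n\ge0,\ \text{the series converges in }L^2([-1,1])\}$ (real $L^2$ for Lebesgue measure, convergence of partial sums); it is a closed convex cone, $P_{\mathcal{A}_+}$ denotes the metric projection onto it (the unique nearest point), and every element of $\mathcal{A}_+$ has a unique representation $\sum_n c_nt^n$ with $c_n\ge0$. *)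

theory Defs
  imports "HOL-Analysis.Analysis"
begin

definition psi :: "real \<Rightarrow> real \<Rightarrow> real" where
  "psi a t = (if a \<le> t then 1 else 0)"

definition L2 :: "(real \<Rightarrow> real) \<Rightarrow> bool" where
  "L2 f \<longleftrightarrow> f \<in> borel_measurable lborel \<and>
     set_integrable lborel {-1..1} (\<lambda>t. (f t)\<^sup>2)"

definition L2dist2 :: "(real \<Rightarrow> real) \<Rightarrow> (real \<Rightarrow> real) \<Rightarrow> real" where
  "L2dist2 f g = (LINT t:{-1..1}|lborel. (f t - g t)\<^sup>2)"

definition series_L2 :: "(nat \<Rightarrow> real) \<Rightarrow> (real \<Rightarrow> real) \<Rightarrow> bool" where
  "series_L2 c g \<longleftrightarrow> L2 g \<and>
     (\<lambda>N. L2dist2 g (\<lambda>t. \<Sum>n<N. c n * t ^ n)) \<longlonglongrightarrow> 0"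

definition in_Aplus :: "(nat \<Rightarrow> real) \<Rightarrow> (real \<Rightarrow> real) \<Rightarrow> bool" where
  "in_Aplus c g \<longleftrightarrow> (\<forall>n. 0 \<le> c n) \<and> series_L2 c g"

definition is_proj_Aplus :: "(real \<Rightarrow> real) \<Rightarrow> (nat \<Rightarrow> real) \<Rightarrow> (real \<Rightarrow> real) \<Rightarrow> bool" where
  "is_proj_Aplus f c g \<longleftrightarrow> in_Aplus c g \<and>
     (\<forall>d h. in_Aplus d h \<longrightarrow> L2dist2 f g \<le> L2dist2 f h)"

end

theory Submission
  imports Defs
begin

text \<open>
  Since \<open>\<A>\<^sub>+\<close> is a closed convex cone generated by the monomials, \<open>g = P(\<psi>\<^sub>a)\<close> is
  characterised by the Kuhn--Tucker conditions: \<open>\<langle>\<psi>\<^sub>a - g, t\<^sup>n\<rangle> \<le> 0\<close> for all \<open>n\<close>, with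
  equality whenever \<open>c\<^sub>n > 0\<close>, and \<open>\<langle>\<psi>\<^sub>a - g, g\<rangle> = 0\<close>.
  If \<open>S(a) = {0,1,2,3}\<close>, the four equalities \<open>\<langle>\<psi>\<^sub>a - g, t\<^sup>k\<rangle> = 0\<close>, \<open>k < 4\<close>, are a linear
  system in \<open>c\<^sub>0, \<dots>, c\<^sub>3\<close> built from the moments of \<open>t\<^sup>n\<close> and \<open>\<psi>\<^sub>a\<close>; its unique solution is
  the stated cubic, whose coefficients are all positive exactly on the window
  \<open>0 < a\<close>, \<open>1 < 5a\<^sup>2\<close>, \<open>5a\<^sup>2 + 5a < 4\<close>, i.e. \<open>1/\<surd>5 < a < (\<surd>105 - 5)/10\<close>.
  Conversely, on the window this cubic satisfies the equalities for \<open>n < 4\<close>, and an explicit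
  estimate gives \<open>\<langle>\<psi>\<^sub>a - p, t\<^sup>n\<rangle> < 0\<close> for \<open>n \<ge> 4\<close>; so it is the projection, and strict
  negativity forces \<open>c\<^sub>n = 0\<close> for \<open>n \<ge> 4\<close>.
\<close>

section \<open>The inner product of \<open>L\<^sup>2([-1,1])\<close>\<close>

definition L2_inner :: "(real \<Rightarrow> real) \<Rightarrow> (real \<Rightarrow> real) \<Rightarrow> real" where
  "L2_inner u v = (LINT t:{-1..1}|lborel. u t * v t)"

lemma L2_measurable: "L2 u \<Longrightarrow> u \<in> borel_measurable lborel"
  unfolding L2_def by auto

lemma L2I:
  assumes "u \<in> borel_measurable lborel" "set_integrable lborel {-1..1::real} (\<lambda>t. u t * u t)"
  shows "L2 u"
  using assms unfolding L2_def by (simp add: power2_eq_square)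

lemma set_integrable_L2_mult:
  assumes "L2 u" "L2 v"
  shows "set_integrable lborel {-1..1::real} (\<lambda>t. u t * v t)"
proof (rule set_integrable_bound[where f="\<lambda>t. (u t)\<^sup>2 + (v t)\<^sup>2"])
  show "set_integrable lborel {-1..1::real} (\<lambda>t. (u t)\<^sup>2 + (v t)\<^sup>2)"
    using assms unfolding L2_def by (intro set_integral_add) auto
  show "set_borel_measurable lborel {-1..1} (\<lambda>t. u t * v t)"
    using assms[THEN L2_measurable] unfolding set_borel_measurable_def by measurable
  have "\<bar>x * y\<bar> \<le> x\<^sup>2 + y\<^sup>2" for x y :: real
  proof -
    have "2 * (\<bar>x\<bar> * \<bar>y\<bar>) \<le> x\<^sup>2 + y\<^sup>2"
      using sum_squares_bound[of "\<bar>x\<bar>" "\<bar>y\<bar>"] by simp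
    moreover have "0 \<le> \<bar>x\<bar> * \<bar>y\<bar>" by simp
    ultimately show ?thesis unfolding abs_mult by linarith
  qed
  then show "AE x in lborel. x \<in> {-1..1} \<longrightarrow> norm (u x * v x) \<le> norm ((u x)\<^sup>2 + (v x)\<^sup>2)"
    by simp
qed

lemma L2_add:
  assumes "L2 u" "L2 v"
  shows "L2 (\<lambda>t. u t + v t)"
proof (rule L2I)
  show "(\<lambda>t. u t + v t) \<in> borel_measurable lborel"
    using assms by (intro borel_measurable_add L2_measurable)
  have "set_integrable lborel {-1..1::real} (\<lambda>t. u t * u t + 2 * (u t * v t) + v t * v t)"
    using assms by (intro set_integral_add set_integrable_mult_right set_integrable_L2_mult)
  then show "set_integrable lborel {-1..1::real} (\<lambda>t. (u t + v t) * (u t + v t))"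
    by (simp add: algebra_simps)
qed

lemma L2_cmult:
  assumes "L2 u"
  shows "L2 (\<lambda>t. r * u t)"
proof (rule L2I)
  show "(\<lambda>t. r * u t) \<in> borel_measurable lborel"
    using assms by (intro borel_measurable_times borel_measurable_const L2_measurable)
  have "set_integrable lborel {-1..1::real} (\<lambda>t. (r * r) * (u t * u t))"
    using assms by (intro set_integrable_mult_right set_integrable_L2_mult)
  then show "set_integrable lborel {-1..1::real} (\<lambda>t. (r * u t) * (r * u t))"
    by (simp add: algebra_simps)
qed

lemma L2_diff: "L2 u \<Longrightarrow> L2 v \<Longrightarrow> L2 (\<lambda>t. u t - v t)"
  using L2_add[of u "\<lambda>t. -1 * v t"] L2_cmult[of v "-1"] by simp

lemma L2_continuous: "continuous_on UNIV u \<Longrightarrow> L2 u"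
  by (rule L2I)
    (auto intro!: borel_measurable_continuous_onI borel_integrable_atLeastAtMost'
      continuous_intros intro: continuous_on_subset)

lemma L2_power: "L2 (\<lambda>t. t ^ n)"
  by (intro L2_continuous continuous_intros)

lemma L2_poly: "L2 (\<lambda>t. \<Sum>k<N. c k * t ^ k)"
  by (intro L2_continuous continuous_intros)

lemma L2_psi: "L2 (psi a)"
proof (rule L2I)
  show "psi a \<in> borel_measurable lborel" unfolding psi_def by measurable
  show "set_integrable lborel {-1..1::real} (\<lambda>t. psi a t * psi a t)"
    by (rule set_integrable_bound[where f="\<lambda>t. 1::real"])
      (auto intro!: borel_integrable_atLeastAtMost' simp: set_borel_measurable_def psi_def)
qed

lemma L2_inner_commute: "L2_inner u v = L2_inner v u"
  unfolding L2_inner_def by (simp add: mult.commute)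

lemma L2_inner_add_right:
  "L2 u \<Longrightarrow> L2 v \<Longrightarrow> L2 w \<Longrightarrow> L2_inner u (\<lambda>t. v t + w t) = L2_inner u v + L2_inner u w"
  unfolding L2_inner_def distrib_left by (intro set_integral_add set_integrable_L2_mult)

lemma L2_inner_cmult_right: "L2_inner u (\<lambda>t. r * v t) = r * L2_inner u v"
  unfolding L2_inner_def by (simp add: mult.left_commute)

lemma L2_inner_diff_right:
  assumes "L2 u" "L2 v" "L2 w"
  shows "L2_inner u (\<lambda>t. v t - w t) = L2_inner u v - L2_inner u w"
  using L2_inner_add_right[OF assms(1,2) L2_cmult[OF assms(3), of "-1"]]
    L2_inner_cmult_right[of u "-1" w]
  by simp

lemma L2_inner_diff_left:
  "L2 u \<Longrightarrow> L2 v \<Longrightarrow> L2 w \<Longrightarrow> L2_inner (\<lambda>t. v t - w t) u = L2_inner v u - L2_inner w u"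
  using L2_inner_diff_right by (simp add: L2_inner_commute)

lemma L2_inner_sum_right:
  assumes "L2 u"
  shows "L2_inner u (\<lambda>t. \<Sum>k<N. c k * t ^ k) = (\<Sum>k<N. c k * L2_inner u (\<lambda>t. t ^ k))"
proof (induction N)
  case (Suc N)
  have "L2_inner u (\<lambda>t. \<Sum>k<Suc N. c k * t ^ k)
      = L2_inner u (\<lambda>t. \<Sum>k<N. c k * t ^ k) + L2_inner u (\<lambda>t. c N * t ^ N)"
    by (simp add: L2_inner_add_right[OF assms L2_poly L2_cmult[OF L2_power]])
  then show ?case
    using Suc by (simp add: L2_inner_cmult_right)
qed (simp add: L2_inner_def)

lemma L2_inner_self_nonneg: "0 \<le> L2_inner u u"
  unfolding L2_inner_def set_lebesgue_integral_def
  by (intro Bochner_Integration.integral_nonneg) (simp add: indicator_def)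

lemma L2dist2_eq_L2_inner: "L2dist2 f h = L2_inner (\<lambda>t. f t - h t) (\<lambda>t. f t - h t)"
  unfolding L2dist2_def L2_inner_def by (simp add: power2_eq_square)

lemma L2dist2_nonneg: "0 \<le> L2dist2 f h"
  unfolding L2dist2_eq_L2_inner by (rule L2_inner_self_nonneg)

lemma L2dist2_commute: "L2dist2 f h = L2dist2 h f"
  unfolding L2dist2_def by (simp add: power2_commute)

lemma L2_inner_diff_cmult_self:
  assumes "L2 u" "L2 v"
  shows "L2_inner (\<lambda>t. u t - s * v t) (\<lambda>t. u t - s * v t)
    = L2_inner u u - 2 * s * L2_inner u v + s\<^sup>2 * L2_inner v v"
  using assms L2_cmult[OF assms(2), of s]
  by (simp add: L2_inner_diff_left L2_inner_diff_right L2_diff L2_inner_cmult_right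
      L2_inner_commute[of "\<lambda>t. s * v t"] L2_inner_commute[of v u] power2_eq_square algebra_simps)

lemma L2_inner_Cauchy_Schwarz:
  assumes "L2 u" "L2 v"
  shows "(L2_inner u v)\<^sup>2 \<le> L2_inner u u * L2_inner v v"
proof -
  define A B C where "A = L2_inner u u" and "B = L2_inner u v" and "C = L2_inner v v"
  have quad: "0 \<le> A - 2 * s * B + s\<^sup>2 * C" for s
    using L2_inner_diff_cmult_self[OF assms, of s] L2_inner_self_nonneg unfolding A_def B_def C_def
    by metis
  show ?thesis
  proof (cases "C = 0")
    case True
    have "B = 0"
    proof (rule ccontr)
      assume "B \<noteq> 0"
      then show False using quad[of "(A + 1) / (2 * B)"] True by (simp add: field_simps)
    qed
    then show ?thesis unfolding A_def B_def C_def[symmetric] by (simp add: True)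
  next
    case False
    then have "0 < C" using L2_inner_self_nonneg unfolding C_def by (metis order_le_less)
    then show ?thesis
      using quad[of "B / C"] unfolding A_def[symmetric] B_def[symmetric] C_def[symmetric]
      by (simp add: field_simps power2_eq_square)
  qed
qed

lemma L2_inner_eq_0_if_self_eq_0:
  assumes "L2 u" "L2 v" "L2_inner u u = 0"
  shows "L2_inner u v = 0"
  using L2_inner_Cauchy_Schwarz[OF assms(1,2)] assms(3) by simp

lemma AE_eq_0_if_L2_inner_self_eq_0:
  assumes "L2 u" "L2_inner u u = 0"
  shows "AE t in lborel. t \<in> {-1..1} \<longrightarrow> u t = 0"
proof -
  have int: "integrable lborel (\<lambda>t. indicator {-1..1::real} t *\<^sub>R (u t * u t))"
    using set_integrable_L2_mult[OF assms(1,1)] unfolding set_integrable_def .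
  have "integral\<^sup>L lborel (\<lambda>t. indicator {-1..1::real} t *\<^sub>R (u t * u t)) = 0"
    using assms(2) unfolding L2_inner_def set_lebesgue_integral_def .
  then have "AE t in lborel. indicator {-1..1::real} t *\<^sub>R (u t * u t) = 0"
    by (subst (asm) integral_nonneg_eq_0_iff_AE[OF int]) (auto simp: indicator_def)
  then show ?thesis
    by eventually_elim (auto simp: indicator_def)
qed

lemma L2_inner_tendsto_right:
  assumes "L2 u" "L2 h" "\<And>N. L2 (s N)" "(\<lambda>N. L2dist2 h (s N)) \<longlonglongrightarrow> 0"
  shows "(\<lambda>N. L2_inner u (s N)) \<longlonglongrightarrow> L2_inner u h"
proof -
  have "(\<lambda>N. L2_inner u (\<lambda>t. h t - s N t)) \<longlonglongrightarrow> 0"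
  proof (rule Lim_null_comparison)
    show "\<forall>\<^sub>F N in sequentially. norm (L2_inner u (\<lambda>t. h t - s N t))
        \<le> sqrt (L2_inner u u * L2dist2 h (s N))"
      using L2_inner_Cauchy_Schwarz[OF assms(1) L2_diff[OF assms(2,3)]]
      by (intro always_eventually allI) (metis L2dist2_eq_L2_inner real_le_rsqrt real_norm_def power2_abs)
    show "(\<lambda>N. sqrt (L2_inner u u * L2dist2 h (s N))) \<longlonglongrightarrow> 0"
      using tendsto_real_sqrt[OF tendsto_mult_right_zero[OF assms(4)]] by simp
  qed
  then have "(\<lambda>N. L2_inner u h - (L2_inner u h - L2_inner u (s N))) \<longlonglongrightarrow> L2_inner u h - 0"
    unfolding L2_inner_diff_right[OF assms(1,2,3)] by (intro tendsto_diff tendsto_const)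
  then show ?thesis by simp
qed

section \<open>Projection onto \<open>\<A>\<^sub>+\<close>\<close>

lemma in_AplusD:
  assumes "in_Aplus c g"
  shows "L2 g" "0 \<le> c n" "(\<lambda>N. L2dist2 g (\<lambda>t. \<Sum>k<N. c k * t ^ k)) \<longlonglongrightarrow> 0"
  using assms unfolding in_Aplus_def series_L2_def by auto

lemma in_Aplus_add_monomial:
  assumes "in_Aplus c g" "0 \<le> s"
  shows "in_Aplus (\<lambda>k. c k + (if k = n then s else 0)) (\<lambda>t. g t + s * t ^ n)"
  unfolding in_Aplus_def series_L2_def
proof (intro conjI allI)
  show "0 \<le> c k + (if k = n then s else 0)" for k
    using in_AplusD(2)[OF assms(1)] assms(2) by simp
  show "L2 (\<lambda>t. g t + s * t ^ n)"
    by (intro L2_add L2_cmult L2_power in_AplusD(1)[OF assms(1)])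
  have shift: "(\<Sum>k<N. (c k + (if k = n then s else 0)) * t ^ k) = (\<Sum>k<N. c k * t ^ k) + s * t ^ n"
    if "n < N" for N and t :: real
  proof -
    have "(c k + (if k = n then s else 0)) * t ^ k = c k * t ^ k + (if k = n then s * t ^ n else 0)"
      for k by (simp add: distrib_right)
    then show ?thesis using that by (simp add: sum.distrib)
  qed
  have "\<forall>\<^sub>F N in sequentially. L2dist2 g (\<lambda>t. \<Sum>k<N. c k * t ^ k)
      = L2dist2 (\<lambda>t. g t + s * t ^ n) (\<lambda>t. \<Sum>k<N. (c k + (if k = n then s else 0)) * t ^ k)"
    using eventually_gt_at_top[of n] by eventually_elim (simp add: L2dist2_def shift)
  from tendsto_cong[OF this] in_AplusD(3)[OF assms(1)]
  show "(\<lambda>N. L2dist2 (\<lambda>t. g t + s * t ^ n)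
      (\<lambda>t. \<Sum>k<N. (c k + (if k = n then s else 0)) * t ^ k)) \<longlonglongrightarrow> 0"
    by simp
qed

lemma in_Aplus_cmult:
  assumes "in_Aplus c g" "0 \<le> r"
  shows "in_Aplus (\<lambda>k. r * c k) (\<lambda>t. r * g t)"
proof -
  have "L2dist2 (\<lambda>t. r * g t) (\<lambda>t. \<Sum>k<N. r * c k * t ^ k)
      = r\<^sup>2 * L2dist2 g (\<lambda>t. \<Sum>k<N. c k * t ^ k)" for N
    unfolding L2dist2_def
    by (simp add: sum_distrib_left[symmetric] mult.assoc right_diff_distrib[symmetric] power_mult_distrib)
  then show ?thesis
    unfolding in_Aplus_def series_L2_def
    using in_AplusD[OF assms(1)] assms(2)
    by (simp add: L2_cmult tendsto_mult_right_zero)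
qed

lemma poly_eq_truncated:
  assumes "\<forall>n\<ge>N. c n = 0" "N \<le> M"
  shows "(\<lambda>t. \<Sum>k<M. c k * t ^ k) = (\<lambda>t. \<Sum>k<N. c k * (t::real) ^ k)"
proof
  show "(\<Sum>k<M. c k * t ^ k) = (\<Sum>k<N. c k * t ^ k)" for t
    by (rule sum.mono_neutral_right) (use assms in auto)
qed

lemma in_Aplus_poly:
  assumes "\<And>n. 0 \<le> c n" "\<forall>n\<ge>N. c n = 0"
  shows "in_Aplus c (\<lambda>t. \<Sum>k<N. c k * t ^ k)"
  unfolding in_Aplus_def series_L2_def
proof (intro conjI allI assms(1) L2_poly)
  have "0 = L2dist2 (\<lambda>t. \<Sum>k<N. c k * t ^ k) (\<lambda>t. \<Sum>k<M. c k * t ^ k)" if "N \<le> M" for M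
    using poly_eq_truncated[OF assms(2) that] by (simp add: L2dist2_def)
  then have "\<forall>\<^sub>F M in sequentially. 0 = L2dist2 (\<lambda>t. \<Sum>k<N. c k * t ^ k) (\<lambda>t. \<Sum>k<M. c k * t ^ k)"
    by (rule eventually_mono[OF eventually_ge_at_top])
  from tendsto_cong[OF this, of 0]
  show "(\<lambda>M. L2dist2 (\<lambda>t. \<Sum>k<N. c k * t ^ k) (\<lambda>t. \<Sum>k<M. c k * t ^ k)) \<longlonglongrightarrow> 0"
    by simp
qed

lemma in_Aplus_L2dist2_truncated:
  assumes "in_Aplus c g" "\<forall>n\<ge>N. c n = 0"
  shows "L2dist2 g (\<lambda>t. \<Sum>k<N. c k * t ^ k) = 0"
proof -
  have "L2dist2 g (\<lambda>t. \<Sum>k<M. c k * t ^ k) = L2dist2 g (\<lambda>t. \<Sum>k<N. c k * t ^ k)" if "N \<le> M" for M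
    using poly_eq_truncated[OF assms(2) that] by simp
  then have "\<forall>\<^sub>F M in sequentially.
      L2dist2 g (\<lambda>t. \<Sum>k<M. c k * t ^ k) = L2dist2 g (\<lambda>t. \<Sum>k<N. c k * t ^ k)"
    by (rule eventually_mono[OF eventually_ge_at_top])
  from tendsto_cong[OF this] in_AplusD(3)[OF assms(1)] show ?thesis
    by (simp add: LIMSEQ_const_iff)
qed

lemma in_Aplus_L2_inner_sums:
  assumes "in_Aplus d h" "L2 u"
  shows "(\<lambda>k. d k * L2_inner u (\<lambda>t. t ^ k)) sums L2_inner u h"
  using L2_inner_tendsto_right[OF assms(2) in_AplusD(1)[OF assms(1)] L2_poly in_AplusD(3)[OF assms(1)]]
  unfolding sums_def L2_inner_sum_right[OF assms(2)] .

lemma L2_inner_cong_L2dist2_eq_0: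
  assumes "L2 u" "L2 v" "L2 w" "L2dist2 u v = 0"
  shows "L2_inner u w = L2_inner v w"
  using L2_inner_eq_0_if_self_eq_0[OF L2_diff[OF assms(1,2)] assms(3)] assms(4)
  by (simp add: L2_inner_diff_left[OF assms(3,1,2)] L2dist2_eq_L2_inner)

lemma L2_inner_nonpos_if_minimal_along:
  assumes "L2 f" "L2 g" "L2 m"
    and min: "\<And>s. 0 < s \<Longrightarrow> s < 1 \<Longrightarrow> L2dist2 f g \<le> L2dist2 f (\<lambda>t. g t + s * m t)"
  shows "L2_inner (\<lambda>t. f t - g t) m \<le> 0"
proof (rule ccontr)
  define X Y where "X = L2_inner (\<lambda>t. f t - g t) m" and "Y = L2_inner m m"
  assume "\<not> L2_inner (\<lambda>t. f t - g t) m \<le> 0"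
  then have X: "0 < X" unfolding X_def by simp
  have Y: "0 \<le> Y" unfolding Y_def by (rule L2_inner_self_nonneg)
  have quad: "0 \<le> - 2 * s * X + s\<^sup>2 * Y" if "0 < s" "s < 1" for s
  proof -
    have "L2dist2 f (\<lambda>t. g t + s * m t) = L2_inner (\<lambda>t. (f t - g t) - s * m t) (\<lambda>t. (f t - g t) - s * m t)"
      unfolding L2dist2_eq_L2_inner by (simp add: algebra_simps)
    also have "\<dots> = L2dist2 f g - 2 * s * X + s\<^sup>2 * Y"
      unfolding X_def Y_def L2dist2_eq_L2_inner
      by (rule L2_inner_diff_cmult_self[OF L2_diff[OF assms(1,2)] assms(3)])
    finally show ?thesis using min[OF that] by simp
  qed
  define s where "s = min (1/2) (X / (Y + 1))"
  have s: "0 < s" "s < 1" using X Y unfolding s_def by auto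
  have "s * Y \<le> X / (Y + 1) * Y" unfolding s_def using Y by (intro mult_right_mono) auto
  also have "\<dots> < X" using X Y by (simp add: field_simps)
  finally have "s * (s * Y) < s * X" using s by simp
  then have "- 2 * s * X + s\<^sup>2 * Y < 0" using s X by (simp add: power2_eq_square algebra_simps)
  with quad[OF s] show False by simp
qed

context
  fixes f g :: "real \<Rightarrow> real" and c :: "nat \<Rightarrow> real"
  assumes proj: "is_proj_Aplus f c g" and f: "L2 f"
begin

lemma proj_Aplus_in_Aplus: "in_Aplus c g"
  using proj unfolding is_proj_Aplus_def by simp

lemma proj_Aplus_minimal: "in_Aplus d h \<Longrightarrow> L2dist2 f g \<le> L2dist2 f h"
  using proj unfolding is_proj_Aplus_def by simp

lemma proj_Aplus_L2_inner_power_nonpos: "L2_inner (\<lambda>t. f t - g t) (\<lambda>t. t ^ n) \<le> 0"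
  by (rule L2_inner_nonpos_if_minimal_along[OF f in_AplusD(1)[OF proj_Aplus_in_Aplus] L2_power])
    (rule proj_Aplus_minimal[OF in_Aplus_add_monomial[OF proj_Aplus_in_Aplus]], simp)

lemma proj_Aplus_L2_inner_self_eq_0: "L2_inner (\<lambda>t. f t - g t) g = 0"
proof -
  have g: "L2 g" by (rule in_AplusD(1)[OF proj_Aplus_in_Aplus])
  have rescale: "L2dist2 f g \<le> L2dist2 f (\<lambda>t. g t + s * (r * g t))" if "0 \<le> 1 + s * r" for r s
  proof -
    have "L2dist2 f g \<le> L2dist2 f (\<lambda>t. (1 + s * r) * g t)"
      by (rule proj_Aplus_minimal[OF in_Aplus_cmult[OF proj_Aplus_in_Aplus that]])
    then show ?thesis by (simp add: algebra_simps)
  qed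
  have "L2_inner (\<lambda>t. f t - g t) (\<lambda>t. r * g t) \<le> 0" if "r = 1 \<or> r = -1" for r
    using that by (intro L2_inner_nonpos_if_minimal_along f g L2_cmult rescale) auto
  from this[of 1] this[of "-1"] show ?thesis
    unfolding L2_inner_cmult_right by simp
qed

lemma proj_Aplus_complementary_slackness: "c n * L2_inner (\<lambda>t. f t - g t) (\<lambda>t. t ^ n) = 0"
proof -
  define r where "r k = - (c k * L2_inner (\<lambda>t. f t - g t) (\<lambda>t. t ^ k))" for k
  have "r sums 0"
    using sums_minus[OF in_Aplus_L2_inner_sums[OF proj_Aplus_in_Aplus
          L2_diff[OF f in_AplusD(1)[OF proj_Aplus_in_Aplus]]]]
    unfolding r_def proj_Aplus_L2_inner_self_eq_0 by simp
  moreover have "0 \<le> r k" for k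
    using mult_nonneg_nonpos[OF in_AplusD(2)[OF proj_Aplus_in_Aplus] proj_Aplus_L2_inner_power_nonpos]
    unfolding r_def by simp
  ultimately have "\<forall>k. r k = 0"
    using suminf_eq_zero_iff[of r] sums_summable[of r 0] sums_unique[of r 0] by simp
  then show ?thesis unfolding r_def by simp
qed

lemma L2dist2_proj_Aplus_eq_0_if_KKT:
  assumes p: "in_Aplus d p"
    and nonpos: "\<And>n. L2_inner (\<lambda>t. f t - p t) (\<lambda>t. t ^ n) \<le> 0"
    and orth: "L2_inner (\<lambda>t. f t - p t) p = 0"
  shows "L2dist2 p g = 0"
proof -
  have Lp: "L2 p" and Lg: "L2 g" and LD: "L2 (\<lambda>t. f t - p t)"
    using in_AplusD(1)[OF p] in_AplusD(1)[OF proj_Aplus_in_Aplus] L2_diff[OF f] by auto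
  have "L2_inner (\<lambda>t. f t - p t) g \<le> 0"
    using mult_nonneg_nonpos[OF in_AplusD(2)[OF proj_Aplus_in_Aplus] nonpos]
    by (rule sums_le[OF _ in_Aplus_L2_inner_sums[OF proj_Aplus_in_Aplus LD] sums_zero])
  then have "L2_inner (\<lambda>t. f t - p t) (\<lambda>t. g t - p t) \<le> 0"
    using L2_inner_diff_right[OF LD Lg Lp] orth by simp
  moreover have "L2dist2 f g = L2dist2 f p - 2 * L2_inner (\<lambda>t. f t - p t) (\<lambda>t. g t - p t) + L2dist2 g p"
    using L2_inner_diff_cmult_self[OF LD L2_diff[OF Lg Lp], of 1]
    by (simp add: L2dist2_eq_L2_inner algebra_simps)
  moreover have "L2dist2 f g \<le> L2dist2 f p"
    by (rule proj_Aplus_minimal[OF p])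
  ultimately show ?thesis
    using L2dist2_nonneg[of g p] L2dist2_commute[of p g] by linarith
qed

end

section \<open>Moments of the cubic candidate\<close>

definition power_moment :: "nat \<Rightarrow> real" where
  "power_moment m = (if even m then 2 / real (m + 1) else 0)"

lemma L2_inner_power_power: "L2_inner (\<lambda>t. t ^ m) (\<lambda>t. t ^ n) = power_moment (m + n)"
proof -
  have "L2_inner (\<lambda>t. t ^ m) (\<lambda>t. t ^ n) = (\<integral>x. x ^ (m + n) * indicator {-1..1} x \<partial>lborel)"
    unfolding L2_inner_def set_lebesgue_integral_def
    by (intro Bochner_Integration.integral_cong) (auto simp: power_add indicator_def)
  also have "\<dots> = (1 ^ Suc (m + n) - (-1) ^ Suc (m + n)) / Suc (m + n)"
    by (rule integral_power) simp
  finally show ?thesis by (simp add: power_moment_def)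
qed

lemma L2_inner_psi_power:
  assumes "-1 \<le> a" "a \<le> 1"
  shows "L2_inner (psi a) (\<lambda>t. t ^ n) = (1 - a ^ (n + 1)) / real (n + 1)"
proof -
  have "L2_inner (psi a) (\<lambda>t. t ^ n) = (\<integral>x. x ^ n * indicator {a..1} x \<partial>lborel)"
    unfolding L2_inner_def set_lebesgue_integral_def using assms
    by (intro Bochner_Integration.integral_cong) (auto simp: psi_def indicator_def)
  also have "\<dots> = (1 ^ Suc n - a ^ Suc n) / Suc n"
    by (rule integral_power) (use assms in simp)
  finally show ?thesis by simp
qed

definition cubic_residual_moment :: "real \<Rightarrow> (nat \<Rightarrow> real) \<Rightarrow> nat \<Rightarrow> real" where
  "cubic_residual_moment a x n = (1 - a ^ (n + 1)) / real (n + 1) - (\<Sum>k<4. x k * power_moment (k + n))"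

lemma L2_inner_psi_minus_cubic:
  assumes "-1 \<le> a" "a \<le> 1"
  shows "L2_inner (\<lambda>t. psi a t - (\<Sum>k<4. x k * t ^ k)) (\<lambda>t. t ^ n) = cubic_residual_moment a x n"
proof -
  have "L2_inner (\<lambda>t. \<Sum>k<4. x k * t ^ k) (\<lambda>t. t ^ n) = (\<Sum>k<4. x k * power_moment (k + n))"
    by (simp add: L2_inner_commute[of _ "\<lambda>t. t ^ n"] L2_inner_sum_right[OF L2_power]
        L2_inner_power_power add.commute)
  then show ?thesis
    by (simp add: L2_inner_diff_left[OF L2_power L2_psi L2_poly] L2_inner_psi_power[OF assms]
        cubic_residual_moment_def)
qed

definition cubic_coeff :: "real \<Rightarrow> nat \<Rightarrow> real" where
  "cubic_coeff a n = (if n = 0 then (1/8) * (1 - a) * (4 - 5*a - 5*a\<^sup>2)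
     else if n = 1 then (15/32) * (1 - a\<^sup>2) * (3 - 7*a\<^sup>2)
     else if n = 2 then (15/8) * a * (1 - a\<^sup>2)
     else if n = 3 then (35/32) * (1 - a\<^sup>2) * (5*a\<^sup>2 - 1) else 0)"

lemma cubic_coeff_expand:
  "cubic_coeff a 0 = 1/2 - 9/8*a + 5/8*a^3"
  "cubic_coeff a 1 = 45/32 - 75/16*a^2 + 105/32*a^4"
  "cubic_coeff a 2 = 15/8*a - 15/8*a^3"
  "cubic_coeff a 3 = -35/32 + 105/16*a^2 - 175/32*a^4"
  "4 \<le> n \<Longrightarrow> cubic_coeff a n = 0"
  by (simp_all add: cubic_coeff_def power2_eq_square power3_eq_cube field_simps eval_nat_numeral)

lemma sum_lessThan_4: "(\<Sum>k<(4::nat). f k) = f 0 + f 1 + f 2 + (f 3 :: real)"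
  by (simp add: eval_nat_numeral)

lemma all_less_4_iff: "(\<forall>k<4. P k) \<longleftrightarrow> P 0 \<and> P 1 \<and> P 2 \<and> P (3::nat)"
  by (auto simp: less_Suc_eq eval_nat_numeral)

lemma cubic_residual_moment_0_to_3:
  "cubic_residual_moment a x 0 = 1 - a - (2 * x 0 + 2/3 * x 2)"
  "cubic_residual_moment a x 1 = (1 - a^2)/2 - (2/3 * x 1 + 2/5 * x 3)"
  "cubic_residual_moment a x 2 = (1 - a^3)/3 - (2/3 * x 0 + 2/5 * x 2)"
  "cubic_residual_moment a x 3 = (1 - a^4)/4 - (2/5 * x 1 + 2/7 * x 3)"
  by (simp_all add: cubic_residual_moment_def power_moment_def sum_lessThan_4 power2_eq_square
      power3_eq_cube power4_eq_xxxx field_simps)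

lemma cubic_residual_moments_eq_0_iff:
  "(\<forall>k<4. cubic_residual_moment a x k = 0) \<longleftrightarrow> (\<forall>k<4. x k = cubic_coeff a k)"
  unfolding all_less_4_iff cubic_residual_moment_0_to_3 cubic_coeff_expand
  by (auto simp: field_simps)

lemma cubic_residual_moment_even:
  "even n \<Longrightarrow> cubic_residual_moment a x n
     = (1 - a ^ (n + 1)) / (real n + 1) - 2 * x 0 / (real n + 1) - 2 * x 2 / (real n + 3)"
  by (simp add: cubic_residual_moment_def power_moment_def sum_lessThan_4 add.commute mult.commute)

lemma cubic_residual_moment_odd:
  "odd n \<Longrightarrow> cubic_residual_moment a x n
     = (1 - a ^ (n + 1)) / (real n + 1) - 2 * x 1 / (real n + 2) - 2 * x 3 / (real n + 4)"
  by (simp add: cubic_residual_moment_def power_moment_def sum_lessThan_4 add.commute mult.commute)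

lemma window_bounds:
  fixes a :: real
  assumes "0 < a" "1 < 5 * a\<^sup>2" "5 * a\<^sup>2 + 5 * a < 4"
  shows "1/5 < a\<^sup>2" "a\<^sup>2 < 7/25" "a < 1"
proof -
  show "1/5 < a\<^sup>2" using assms(2) by simp
  show b: "a\<^sup>2 < 7/25"
  proof (rule ccontr)
    assume "\<not> a\<^sup>2 < 7/25"
    then have "7/25 \<le> a\<^sup>2" "a < 13/25" using assms(3) by auto
    moreover have "a\<^sup>2 < (13/25)\<^sup>2"
      using \<open>a < 13/25\<close> assms(1) by (intro power_strict_mono) auto
    ultimately show False by (simp add: power2_eq_square)
  qed
  show "a < 1"
    using power2_less_imp_less[of a 1] b by simp
qed

lemma cubic_residual_moment_neg_even:
  assumes "0 < a" "1 < 5 * a\<^sup>2" "5 * a\<^sup>2 + 5 * a < 4" "4 \<le> n" "even n"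
  shows "cubic_residual_moment a (cubic_coeff a) n < 0"
proof -
  define x A where "x = real n" and "A = a ^ (n + 1)"
  have x: "4 \<le> x" using assms(4) unfolding x_def by simp
  have "cubic_residual_moment a (cubic_coeff a) n * ((x + 1) * (x + 3))
      = (1 - A - 2 * cubic_coeff a 0) * (x + 3) - 2 * cubic_coeff a 2 * (x + 1)"
  proof -
    have "(P / u - Q / v) * (u * v) = P * v - Q * u" if "u \<noteq> 0" "v \<noteq> 0" for P Q u v :: real
      using that by (simp add: field_simps)
    from this[of "x + 1" "x + 3" "1 - A - 2 * cubic_coeff a 0" "2 * cubic_coeff a 2"] x show ?thesis
      unfolding cubic_residual_moment_even[OF assms(5)] x_def[symmetric] A_def[symmetric]
      by (simp add: diff_divide_distrib)
  qed
  also have "\<dots> = - (A * (x + 3)) - (a * (3 - 5 * a\<^sup>2) / 2 * (x - 4) + a * (3 - 10 * a\<^sup>2))"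
    unfolding cubic_coeff_expand by (simp add: field_simps power2_eq_square power3_eq_cube)
  also have "\<dots> < 0"
  proof -
    have "0 < A * (x + 3)" using assms(1) x unfolding A_def by simp
    moreover have "0 < a * (3 - 5 * a\<^sup>2) / 2 * (x - 4) + a * (3 - 10 * a\<^sup>2)"
      using window_bounds[OF assms(1-3)] assms(1) x
      by (intro add_nonneg_pos mult_nonneg_nonneg mult_pos_pos) auto
    ultimately show ?thesis by linarith
  qed
  finally show ?thesis
    using x by (simp add: mult_less_0_iff)
qed

lemma cubic_residual_moment_neg_odd:
  assumes "0 < a" "1 < 5 * a\<^sup>2" "5 * a\<^sup>2 + 5 * a < 4" "4 \<le> n" "odd n"
  shows "cubic_residual_moment a (cubic_coeff a) n < 0"
proof -
  define x A b where "x = real n" and "A = a ^ (n + 1)" and "b = a\<^sup>2"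
  have "n \<noteq> 4" using assms(5) by auto
  then have x: "5 \<le> x" using assms(4) unfolding x_def by simp
  have b: "1/5 < b" "b < 7/25" using window_bounds[OF assms(1-3)] unfolding b_def by auto
  \<comment> \<open>Expanded around \<open>n = 5\<close>, the numerator has nonnegative coefficients throughout the window.\<close>
  define q2 q1 q0 where "q2 = -3/8 + 15/4 * b - 35/8 * b\<^sup>2"
    and "q1 = -9/4 + 30 * b - 175/4 * b\<^sup>2" and "q0 = -3 + 45 * b - 105 * b\<^sup>2"
  have "0 \<le> (b - 1/5) * (7/25 - b)" using b by simp
  moreover have "(b - 1/5) * (7/25 - b) = 12/25 * b - 7/125 - b\<^sup>2"
    by (simp add: power2_eq_square field_simps)
  ultimately have q: "0 \<le> q2" "0 \<le> q1" "0 < q0"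
    unfolding q2_def q1_def q0_def using b by linarith+
  have "cubic_residual_moment a (cubic_coeff a) n * ((x + 1) * (x + 2) * (x + 4))
      = (1 - A) * (x + 2) * (x + 4) - 2 * cubic_coeff a 1 * (x + 1) * (x + 4)
        - 2 * cubic_coeff a 3 * (x + 1) * (x + 2)"
  proof -
    have "(P / u - Q / v - R / w) * (u * v * w) = P * v * w - Q * u * w - R * u * v"
      if "u \<noteq> 0" "v \<noteq> 0" "w \<noteq> 0" for P Q R u v w :: real
      using that by (simp add: field_simps)
    from this[of "x + 1" "x + 2" "x + 4" "1 - A" "2 * cubic_coeff a 1" "2 * cubic_coeff a 3"] x
    show ?thesis
      unfolding cubic_residual_moment_odd[OF assms(5)] x_def[symmetric] A_def[symmetric]
      by (simp add: algebra_simps)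
  qed
  also have "\<dots> = - (A * ((x + 2) * (x + 4))) - (q2 * (x - 5)\<^sup>2 + q1 * (x - 5) + q0)"
    unfolding cubic_coeff_expand q2_def q1_def q0_def b_def
    by (simp add: field_simps power2_eq_square power4_eq_xxxx)
  also have "\<dots> < 0"
  proof -
    have "0 < A * ((x + 2) * (x + 4))" using assms(1) x unfolding A_def by simp
    moreover have "0 < q2 * (x - 5)\<^sup>2 + q1 * (x - 5) + q0"
      using x q by (intro add_nonneg_pos add_nonneg_nonneg mult_nonneg_nonneg) auto
    ultimately show ?thesis by linarith
  qed
  finally show ?thesis
    using x by (simp add: mult_less_0_iff)
qed

section \<open>The projection of \<open>\<psi>\<^sub>a\<close>\<close>

lemma sqrt_window_iff:
  fixes a :: real
  shows "(1 / sqrt 5 < a \<and> a < (sqrt 105 - 5) / 10) \<longleftrightarrow> (0 < a \<and> 1 < 5 * a\<^sup>2 \<and> 5 * a\<^sup>2 + 5 * a < 4)"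
proof (cases "0 < a")
  case True
  have "1 / sqrt 5 < a \<longleftrightarrow> sqrt (1/5) < sqrt (a\<^sup>2)"
    using True by (simp add: real_sqrt_divide)
  also have "\<dots> \<longleftrightarrow> 1 < 5 * a\<^sup>2" by (subst real_sqrt_less_iff) auto
  finally have lower: "1 / sqrt 5 < a \<longleftrightarrow> 1 < 5 * a\<^sup>2" .
  have "a < (sqrt 105 - 5) / 10 \<longleftrightarrow> 10 * a + 5 < sqrt 105"
    by (simp add: field_simps)
  also have "\<dots> \<longleftrightarrow> sqrt ((10 * a + 5)\<^sup>2) < sqrt 105"
    using True by simp
  also have "\<dots> \<longleftrightarrow> 5 * a\<^sup>2 + 5 * a < 4"
    by (subst real_sqrt_less_iff) (auto simp: power2_eq_square algebra_simps)
  finally show ?thesis using lower True by simp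
next
  case False
  moreover have "0 < 1 / sqrt 5" by simp
  ultimately show ?thesis by linarith
qed

lemma cubic_coeff_pos_iff:
  assumes "-1 \<le> a" "a < 1"
  shows "(\<forall>k<4. 0 < cubic_coeff a k) \<longleftrightarrow> (0 < a \<and> 1 < 5 * a\<^sup>2 \<and> 5 * a\<^sup>2 + 5 * a < 4)"
proof -
  have sq: "a\<^sup>2 \<le> 1" using assms by (simp add: abs_square_le_1)
  have "0 < cubic_coeff a 0 \<longleftrightarrow> 5 * a\<^sup>2 + 5 * a < 4"
    using assms by (auto simp: cubic_coeff_def zero_less_mult_iff)
  moreover have "0 < cubic_coeff a 1 \<longleftrightarrow> a\<^sup>2 < 1 \<and> 7 * a\<^sup>2 < 3"
    using sq by (auto simp: cubic_coeff_def zero_less_mult_iff)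
  moreover have "0 < cubic_coeff a 2 \<longleftrightarrow> 0 < a \<and> a\<^sup>2 < 1"
    using sq by (auto simp: cubic_coeff_def zero_less_mult_iff)
  moreover have "0 < cubic_coeff a 3 \<longleftrightarrow> a\<^sup>2 < 1 \<and> 1 < 5 * a\<^sup>2"
    using sq by (auto simp: cubic_coeff_def zero_less_mult_iff)
  moreover have "a\<^sup>2 < 7/25" if "0 < a" "1 < 5 * a\<^sup>2" "5 * a\<^sup>2 + 5 * a < 4"
    using window_bounds[OF that] by simp
  ultimately show ?thesis
    unfolding all_less_4_iff by auto
qed

lemma cubic_coeff_support:
  assumes "0 < a" "1 < 5 * a\<^sup>2" "5 * a\<^sup>2 + 5 * a < 4"
  shows "{n. 0 < cubic_coeff a n} = {0, 1, 2, 3}"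
proof -
  have "\<forall>k<4. 0 < cubic_coeff a k"
    using cubic_coeff_pos_iff[of a] assms window_bounds(3)[OF assms] by simp
  then have "0 < cubic_coeff a n \<longleftrightarrow> n < 4" for n
    using cubic_coeff_expand(5)[of n a] by (cases "n < 4") auto
  then show ?thesis
    by (auto simp: less_Suc_eq eval_nat_numeral)
qed

lemma in_Aplus_psi_coeff_eq_cubic_coeff:
  assumes "-1 \<le> a" "a \<le> 1" "in_Aplus c g" "\<forall>n\<ge>4. c n = 0"
    and orth: "\<forall>k<4. L2_inner (\<lambda>t. psi a t - g t) (\<lambda>t. t ^ k) = 0"
  shows "\<forall>k<4. c k = cubic_coeff a k"
proof -
  have "L2dist2 (\<lambda>t. psi a t - g t) (\<lambda>t. psi a t - (\<Sum>k<4. c k * t ^ k)) = 0"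
    using in_Aplus_L2dist2_truncated[OF assms(3,4)] by (simp add: L2dist2_def power2_commute)
  then have "\<forall>k<4. cubic_residual_moment a c k = 0"
    using orth L2_inner_psi_minus_cubic[OF assms(1,2)]
      L2_inner_cong_L2dist2_eq_0[OF L2_diff[OF L2_psi in_AplusD(1)[OF assms(3)]]
        L2_diff[OF L2_psi L2_poly] L2_power]
    by simp
  then show ?thesis
    using cubic_residual_moments_eq_0_iff by blast
qed

lemma proj_psi_support_imp_window:
  assumes "-1 \<le> a" "a < 1" "is_proj_Aplus (psi a) c g" "{n. 0 < c n} = {0, 1, 2, 3}"
  shows "0 < a \<and> 1 < 5 * a\<^sup>2 \<and> 5 * a\<^sup>2 + 5 * a < 4"
proof -
  note cg = proj_Aplus_in_Aplus[OF assms(3) L2_psi]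
  have pos: "\<forall>k<4. 0 < c k"
    using assms(4) by (auto simp: all_less_4_iff)
  have "\<forall>n\<ge>4. c n = 0"
  proof (intro allI impI)
    fix n :: nat
    assume "4 \<le> n"
    then have "n \<notin> {n. 0 < c n}" unfolding assms(4) by auto
    then show "c n = 0" using in_AplusD(2)[OF cg, of n] by simp
  qed
  moreover have "L2_inner (\<lambda>t. psi a t - g t) (\<lambda>t. t ^ k) = 0" if "k < 4" for k
    using pos[rule_format, OF that] proj_Aplus_complementary_slackness[OF assms(3) L2_psi, of k]
    by simp
  ultimately have "\<forall>k<4. c k = cubic_coeff a k"
    using in_Aplus_psi_coeff_eq_cubic_coeff[OF assms(1) _ cg] assms(2) by auto
  then show ?thesis
    using pos cubic_coeff_pos_iff[OF assms(1,2)] by simp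
qed

lemma cubic_residual_moment_eq_0: "n < 4 \<Longrightarrow> cubic_residual_moment a (cubic_coeff a) n = 0"
  using cubic_residual_moments_eq_0_iff by blast

lemma cubic_residual_moment_neg:
  assumes "0 < a" "1 < 5 * a\<^sup>2" "5 * a\<^sup>2 + 5 * a < 4" "4 \<le> n"
  shows "cubic_residual_moment a (cubic_coeff a) n < 0"
proof (cases "even n")
  case True
  then show ?thesis by (rule cubic_residual_moment_neg_even[OF assms])
next
  case False
  then show ?thesis by (intro cubic_residual_moment_neg_odd[OF assms]) simp
qed

lemma L2dist2_cubic_proj_psi_eq_0:
  assumes "-1 \<le> a" and window: "0 < a" "1 < 5 * a\<^sup>2" "5 * a\<^sup>2 + 5 * a < 4"
    and proj: "is_proj_Aplus (psi a) c g"
  shows "L2dist2 (\<lambda>t. \<Sum>k<4. cubic_coeff a k * t ^ k) g = 0"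
proof -
  have a1: "a < 1" using window_bounds(3)[OF window] .
  define p where "p = (\<lambda>t. \<Sum>k<4. cubic_coeff a k * t ^ k)"
  have moment: "L2_inner (\<lambda>t. psi a t - p t) (\<lambda>t. t ^ n) = cubic_residual_moment a (cubic_coeff a) n"
    for n unfolding p_def using a1 by (intro L2_inner_psi_minus_cubic[OF assms(1)]) simp
  have pos: "\<forall>k<4. 0 < cubic_coeff a k"
    using cubic_coeff_pos_iff[OF assms(1) a1] window by simp
  have "in_Aplus (cubic_coeff a) p"
    unfolding p_def
  proof (rule in_Aplus_poly)
    show "0 \<le> cubic_coeff a n" for n
      by (cases "n < 4") (simp_all add: pos less_imp_le cubic_coeff_expand(5))
  qed (simp add: cubic_coeff_expand(5))
  moreover have "L2_inner (\<lambda>t. psi a t - p t) (\<lambda>t. t ^ n) \<le> 0" for n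
    unfolding moment using cubic_residual_moment_eq_0[of n a] cubic_residual_moment_neg[OF window, of n]
    by (cases "n < 4") auto
  moreover have "L2_inner (\<lambda>t. psi a t - p t) p = 0"
  proof -
    have "L2_inner (\<lambda>t. psi a t - p t) p
        = (\<Sum>k<4. cubic_coeff a k * cubic_residual_moment a (cubic_coeff a) k)"
      unfolding moment[symmetric] unfolding p_def
      by (rule L2_inner_sum_right[OF L2_diff[OF L2_psi L2_poly]])
    also have "\<dots> = 0"
      by (intro sum.neutral ballI) (simp add: cubic_residual_moment_eq_0)
    finally show ?thesis .
  qed
  ultimately show ?thesis
    unfolding p_def[symmetric] by (rule L2dist2_proj_Aplus_eq_0_if_KKT[OF proj L2_psi])
qed

lemma proj_psi_eq_cubic:
  assumes "-1 \<le> a" and window: "0 < a" "1 < 5 * a\<^sup>2" "5 * a\<^sup>2 + 5 * a < 4"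
    and proj: "is_proj_Aplus (psi a) c g"
  shows "c = cubic_coeff a"
    and "AE t in lborel. t \<in> {-1..1} \<longrightarrow> g t = (\<Sum>k<4. cubic_coeff a k * t ^ k)"
proof -
  have a1: "a \<le> 1" using window_bounds(3)[OF window] by simp
  note cg = proj_Aplus_in_Aplus[OF proj L2_psi]
  define p where "p = (\<lambda>t. \<Sum>k<4. cubic_coeff a k * t ^ k)"
  have dist: "L2dist2 p g = 0"
    unfolding p_def by (rule L2dist2_cubic_proj_psi_eq_0[OF assms])
  have same: "L2_inner (\<lambda>t. psi a t - g t) (\<lambda>t. t ^ n) = cubic_residual_moment a (cubic_coeff a) n"
    for n
  proof -
    have "L2dist2 (\<lambda>t. psi a t - g t) (\<lambda>t. psi a t - p t) = L2dist2 p g"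
      unfolding L2dist2_def by (simp add: power2_commute)
    then show ?thesis
      using L2_inner_cong_L2dist2_eq_0[OF L2_diff[OF L2_psi in_AplusD(1)[OF cg]]
          L2_diff[OF L2_psi L2_poly] L2_power] dist L2_inner_psi_minus_cubic[OF assms(1) a1]
      unfolding p_def by simp
  qed
  have tail: "c n = 0" if "4 \<le> n" for n
    using proj_Aplus_complementary_slackness[OF proj L2_psi, of n] cubic_residual_moment_neg[OF window that]
    unfolding same by simp
  have head: "\<forall>k<4. c k = cubic_coeff a k"
    using in_Aplus_psi_coeff_eq_cubic_coeff[OF assms(1) a1 cg] tail same cubic_residual_moment_eq_0
    by simp
  show "c = cubic_coeff a"
  proof
    show "c n = cubic_coeff a n" for n
      by (cases "n < 4") (simp_all add: head tail cubic_coeff_expand(5))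
  qed
  have "L2_inner (\<lambda>t. p t - g t) (\<lambda>t. p t - g t) = 0"
    using dist unfolding L2dist2_eq_L2_inner .
  then have "AE t in lborel. t \<in> {-1..1} \<longrightarrow> p t - g t = 0"
    unfolding p_def by (intro AE_eq_0_if_L2_inner_self_eq_0 L2_diff L2_poly in_AplusD(1)[OF cg])
  then show "AE t in lborel. t \<in> {-1..1} \<longrightarrow> g t = (\<Sum>k<4. cubic_coeff a k * t ^ k)"
    unfolding p_def by eventually_elim simp
qed

theorem proposition1p11:
  fixes a :: real and c :: "nat \<Rightarrow> real" and g :: "real \<Rightarrow> real"
  assumes "-1 \<le> a" and "a < 1"
    and "is_proj_Aplus (psi a) c g"
  shows "({n. c n > 0} = {0, 1, 2, 3} \<longleftrightarrow> 1 / sqrt 5 < a \<and> a < (sqrt 105 - 5) / 10)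
    \<and> (1 / sqrt 5 < a \<and> a < (sqrt 105 - 5) / 10 \<longrightarrow>
        (AE t in lborel. t \<in> {-1..1} \<longrightarrow>
           g t = (1/8) * (1 - a) * (4 - 5*a - 5*a\<^sup>2)
               + (15/32) * (1 - a\<^sup>2) * (3 - 7*a\<^sup>2) * t
               + (15/8) * a * (1 - a\<^sup>2) * t\<^sup>2
               + (35/32) * (1 - a\<^sup>2) * (5*a\<^sup>2 - 1) * t ^ 3))"
proof -
  have "{n. c n > 0} = {0, 1, 2, 3} \<longleftrightarrow> 0 < a \<and> 1 < 5 * a\<^sup>2 \<and> 5 * a\<^sup>2 + 5 * a < 4"
  proof
    assume "0 < a \<and> 1 < 5 * a\<^sup>2 \<and> 5 * a\<^sup>2 + 5 * a < 4"
    then show "{n. c n > 0} = {0, 1, 2, 3}"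
      using proj_psi_eq_cubic(1)[OF assms(1) _ _ _ assms(3)] cubic_coeff_support[of a] by simp
  qed (rule proj_psi_support_imp_window[OF assms])
  moreover have "0 < a \<and> 1 < 5 * a\<^sup>2 \<and> 5 * a\<^sup>2 + 5 * a < 4 \<longrightarrow>
      (AE t in lborel. t \<in> {-1..1} \<longrightarrow>
           g t = (1/8) * (1 - a) * (4 - 5*a - 5*a\<^sup>2)
               + (15/32) * (1 - a\<^sup>2) * (3 - 7*a\<^sup>2) * t
               + (15/8) * a * (1 - a\<^sup>2) * t\<^sup>2
               + (35/32) * (1 - a\<^sup>2) * (5*a\<^sup>2 - 1) * t ^ 3)"
    using proj_psi_eq_cubic(2)[OF assms(1) _ _ _ assms(3)] by (simp add: sum_lessThan_4 cubic_coeff_def)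
  ultimately show ?thesis
    unfolding sqrt_window_iff by blast
qed

end
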